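(* Let $\mathbb{A}$ be a 2-category and $p:e\to b$ a 1-cell such that $\mathbb{A}$ has the two-dimensional cokernel diagram of $p$. If $p$ has a left adjoint, then a right Kan extension $(t,\gamma)$ of $p$ along $p$ exists and it is preserved by $\delta^0:b\to b\uparrow_pb$. In particular, in the 2-category $\mathbf{Cat}$ of categories, functors and natural transformations (which has the two-dimensional cokernel diagram of every functor), every functor $p$ having a left adjoint has $\mathrm{Ran}_pp$ preserved by $\delta^0$.
   Context: A 2-category is a $\mathbf{Cat}$-enriched category; composition of 1-cells is juxtaposition, vertical composition of 2-cells is $\cdot$, horizontal composition is $\ast$, $\mathrm{id}_f$ is the identity 2-cell on $f$. An adjunction $l\dashv p$ in $\mathbb{A}$ is given by 1-cells $l:b\to e$, $p:e\to b$ and 2-cells $\varepsilon:lp\Rightarrow\mathrm{id}_e$, $\eta:\mathrm{id}_b\Rightarrow pl$ satisfying the triangle identities. Opcomma object of $p$ along itself: an object $b\uparrow_p b$ with 1-cells $\delta^0,\delta^1:b\to b\uparrow_p b$ and a 2-cell $\alpha:\delta^1p\Rightarrow\delta^0p$ such that for every object $y$ the functor $h\mapsto(h\delta^0,h\delta^1,\mathrm{id}_h\ast\alpha)$, $\xi\mapsto(\xi\ast\mathrm{id}_{\delta^0},\xi\ast\mathrm{id}_{\delta^1})$ is an isomorphism from $\mathbb{A}(b\uparrow_p b,y)$ onto the category of triples $(h_0,h_1:b\to y,\ \beta:h_1p\Rightarrow h_0p)$ with morphisms pairs of 2-cells $(\xi_0:h_0\Rightarrow h_0',\xi_1:h_1\Rightarrow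 h_1')$ satisfying $(\xi_0\ast\mathrm{id}_p)\cdot\beta=\beta'\cdot(\xi_1\ast\mathrm{id}_p)$. Two-dimensional pushout of a span $f_0:c\to c_0$, $f_1:c\to c_1$: an object $P$ with $q_0:c_0\to P$, $q_1:c_1\to P$, $q_0f_0=q_1f_1$, such that for every $y$, $k\mapsto(kq_0,kq_1)$ is an isomorphism from $\mathbb{A}(P,y)$ onto the category of pairs $(k_0,k_1)$ with $k_0f_0=k_1f_1$, whose morphisms are pairs of 2-cells $(\xi_0,\xi_1)$ with $\xi_0\ast\mathrm{id}_{f_0}=\xi_1\ast\mathrm{id}_{f_1}$. $\mathbb{A}$ has the two-dimensional cokernel diagram of $p$ if it has an opcomma object $b\uparrow_p b$ of $p$ along itself and a two-dimensional pushout $b\uparrow_pb\uparrow_pb$ of the span $(\delta^0,\delta^1)$, with 1-cells $D^0,D^2$ satisfying $D^2\delta^0=D^0\delta^1$. Right Kan extension of $f:z\to y$ along $g:z\to x$: a pair $(r:x\to y,\gamma:rg\Rightarrow f)$ such that for each $k:x\to y$, $\beta\mapsto\gamma\cdot(\beta\ast\mathrm{id}_g)$ is a bijection from 2-cells $k\Rightarrow r$ to 2-cells $kg\Rightarrow f$. A 1-cell $d:y\to y'$ preserves it if $(dr,\mathrm{id}_d\ast\gamma)$ is a right Kan extension of $df$ along $g$. *)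

theory Defs
  imports Main
begin

text \<open>A (strict) 2-category, i.e. a Cat-enriched category, presented by its cells.
  cmp g f is the composite gf (first f, then g);
  vcmp b a is the vertical composite b . a (first a, then b);
  hcmp b a is the horizontal composite b * a, where a : f => f' and b : g => g'
  with trg f = src g, giving b * a : gf => g'f'.\<close>

record ('o, 'm, 'c) twocat =
  Obj  :: "'o set"
  Arr  :: "'m set"
  src  :: "'m \<Rightarrow> 'o"
  trg  :: "'m \<Rightarrow> 'o"
  idm  :: "'o \<Rightarrow> 'm"
  cmp  :: "'m \<Rightarrow> 'm \<Rightarrow> 'm"
  Cell :: "'c set"
  dom2 :: "'c \<Rightarrow> 'm"
  cod2 :: "'c \<Rightarrow> 'm"
  id2  :: "'m \<Rightarrow> 'c"
  vcmp :: "'c \<Rightarrow> 'c \<Rightarrow> 'c"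
  hcmp :: "'c \<Rightarrow> 'c \<Rightarrow> 'c"

definition hom1 :: "('o, 'm, 'c, 'x) twocat_scheme \<Rightarrow> 'o \<Rightarrow> 'o \<Rightarrow> 'm set" where
  "hom1 C x y = {f \<in> Arr C. src C f = x \<and> trg C f = y}"

definition hom2 :: "('o, 'm, 'c, 'x) twocat_scheme \<Rightarrow> 'm \<Rightarrow> 'm \<Rightarrow> 'c set" where
  "hom2 C f g = {a \<in> Cell C. dom2 C a = f \<and> cod2 C a = g}"

definition two_category :: "('o, 'm, 'c, 'x) twocat_scheme \<Rightarrow> bool" where
  "two_category C \<longleftrightarrow>
    \<comment> \<open>underlying category of objects and 1-cells\<close>
    (\<forall>f\<in>Arr C. src C f \<in> Obj C \<and> trg C f \<in> Obj C) \<and>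
    (\<forall>x\<in>Obj C. idm C x \<in> hom1 C x x) \<and>
    (\<forall>x y z f g. f \<in> hom1 C x y \<longrightarrow> g \<in> hom1 C y z \<longrightarrow> cmp C g f \<in> hom1 C x z) \<and>
    (\<forall>w x y z f g h. f \<in> hom1 C w x \<longrightarrow> g \<in> hom1 C x y \<longrightarrow> h \<in> hom1 C y z \<longrightarrow>
        cmp C h (cmp C g f) = cmp C (cmp C h g) f) \<and>
    (\<forall>f\<in>Arr C. cmp C (idm C (trg C f)) f = f \<and> cmp C f (idm C (src C f)) = f) \<and>
    \<comment> \<open>2-cells are between parallel 1-cells\<close>
    (\<forall>a\<in>Cell C. dom2 C a \<in> Arr C \<and> cod2 C a \<in> Arr C \<and>
        src C (dom2 C a) = src C (cod2 C a) \<and> trg C (dom2 C a) = trg C (cod2 C a)) \<and>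
    \<comment> \<open>vertical composition: each hom is a category\<close>
    (\<forall>f\<in>Arr C. id2 C f \<in> hom2 C f f) \<and>
    (\<forall>f g h a b. a \<in> hom2 C f g \<longrightarrow> b \<in> hom2 C g h \<longrightarrow> vcmp C b a \<in> hom2 C f h) \<and>
    (\<forall>f g h k a b c. a \<in> hom2 C f g \<longrightarrow> b \<in> hom2 C g h \<longrightarrow> c \<in> hom2 C h k \<longrightarrow>
        vcmp C c (vcmp C b a) = vcmp C (vcmp C c b) a) \<and>
    (\<forall>a\<in>Cell C. vcmp C (id2 C (cod2 C a)) a = a \<and> vcmp C a (id2 C (dom2 C a)) = a) \<and>
    \<comment> \<open>horizontal composition: composition is a functor\<close>
    (\<forall>f f' g g' a b. a \<in> hom2 C f f' \<longrightarrow> b \<in> hom2 C g g' \<longrightarrow> trg C f = src C g \<longrightarrow>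
        hcmp C b a \<in> hom2 C (cmp C g f) (cmp C g' f')) \<and>
    (\<forall>f g. f \<in> Arr C \<longrightarrow> g \<in> Arr C \<longrightarrow> trg C f = src C g \<longrightarrow>
        hcmp C (id2 C g) (id2 C f) = id2 C (cmp C g f)) \<and>
    (\<forall>f f' f'' g g' g'' a a' b b'.
        a \<in> hom2 C f f' \<longrightarrow> a' \<in> hom2 C f' f'' \<longrightarrow> b \<in> hom2 C g g' \<longrightarrow> b' \<in> hom2 C g' g'' \<longrightarrow>
        trg C f = src C g \<longrightarrow>
        hcmp C (vcmp C b' b) (vcmp C a' a) = vcmp C (hcmp C b' a') (hcmp C b a)) \<and>
    \<comment> \<open>horizontal composition is associative and unital\<close>
    (\<forall>a b c. a \<in> Cell C \<longrightarrow> b \<in> Cell C \<longrightarrow> c \<in> Cell C \<longrightarrow>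
        trg C (dom2 C a) = src C (dom2 C b) \<longrightarrow> trg C (dom2 C b) = src C (dom2 C c) \<longrightarrow>
        hcmp C c (hcmp C b a) = hcmp C (hcmp C c b) a) \<and>
    (\<forall>a\<in>Cell C. hcmp C (id2 C (idm C (trg C (dom2 C a)))) a = a \<and>
                hcmp C a (id2 C (idm C (src C (dom2 C a)))) = a)"

definition is_adjunction ::
  "('o, 'm, 'c, 'x) twocat_scheme \<Rightarrow> 'm \<Rightarrow> 'm \<Rightarrow> 'c \<Rightarrow> 'c \<Rightarrow> bool" where
  "is_adjunction C l p eps eta \<longleftrightarrow>
    l \<in> hom1 C (trg C p) (src C p) \<and> p \<in> hom1 C (src C p) (trg C p) \<and>
    eps \<in> hom2 C (cmp C l p) (idm C (src C p)) \<and>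
    eta \<in> hom2 C (idm C (trg C p)) (cmp C p l) \<and>
    vcmp C (hcmp C eps (id2 C l)) (hcmp C (id2 C l) eta) = id2 C l \<and>
    vcmp C (hcmp C (id2 C p) eps) (hcmp C eta (id2 C p)) = id2 C p"

text \<open>Opcomma object (q, d0, d1, alpha) of p along itself, alpha : d1 p => d0 p.
  The comparison functor A(q,y) -> triples is an isomorphism of categories: bijective on
  objects and bijective on each set of morphisms.\<close>
definition is_opcomma ::
  "('o, 'm, 'c, 'x) twocat_scheme \<Rightarrow> 'm \<Rightarrow> 'o \<Rightarrow> 'm \<Rightarrow> 'm \<Rightarrow> 'c \<Rightarrow> bool" where
  "is_opcomma C p q d0 d1 \<alpha> \<longleftrightarrow>
    q \<in> Obj C \<and> d0 \<in> hom1 C (trg C p) q \<and> d1 \<in> hom1 C (trg C p) q \<and>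
    \<alpha> \<in> hom2 C (cmp C d1 p) (cmp C d0 p) \<and>
    (\<forall>y\<in>Obj C. \<forall>h0\<in>hom1 C (trg C p) y. \<forall>h1\<in>hom1 C (trg C p) y.
       \<forall>\<beta>\<in>hom2 C (cmp C h1 p) (cmp C h0 p).
         (\<exists>!h. h \<in> hom1 C q y \<and> cmp C h d0 = h0 \<and> cmp C h d1 = h1 \<and>
               hcmp C (id2 C h) \<alpha> = \<beta>)) \<and>
    (\<forall>y\<in>Obj C. \<forall>h\<in>hom1 C q y. \<forall>h'\<in>hom1 C q y.
       \<forall>\<xi>0\<in>hom2 C (cmp C h d0) (cmp C h' d0). \<forall>\<xi>1\<in>hom2 C (cmp C h d1) (cmp C h' d1).
         vcmp C (hcmp C \<xi>0 (id2 C p)) (hcmp C (id2 C h) \<alpha>) =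
         vcmp C (hcmp C (id2 C h') \<alpha>) (hcmp C \<xi>1 (id2 C p)) \<longrightarrow>
         (\<exists>!\<xi>. \<xi> \<in> hom2 C h h' \<and> hcmp C \<xi> (id2 C d0) = \<xi>0 \<and> hcmp C \<xi> (id2 C d1) = \<xi>1))"

definition is_2pushout ::
  "('o, 'm, 'c, 'x) twocat_scheme \<Rightarrow> 'm \<Rightarrow> 'm \<Rightarrow> 'o \<Rightarrow> 'm \<Rightarrow> 'm \<Rightarrow> bool" where
  "is_2pushout C f0 f1 P q0 q1 \<longleftrightarrow>
    f0 \<in> Arr C \<and> f1 \<in> Arr C \<and> src C f0 = src C f1 \<and> P \<in> Obj C \<and>
    q0 \<in> hom1 C (trg C f0) P \<and> q1 \<in> hom1 C (trg C f1) P \<and>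
    cmp C q0 f0 = cmp C q1 f1 \<and>
    (\<forall>y\<in>Obj C. \<forall>k0\<in>hom1 C (trg C f0) y. \<forall>k1\<in>hom1 C (trg C f1) y.
       cmp C k0 f0 = cmp C k1 f1 \<longrightarrow>
       (\<exists>!k. k \<in> hom1 C P y \<and> cmp C k q0 = k0 \<and> cmp C k q1 = k1)) \<and>
    (\<forall>y\<in>Obj C. \<forall>k\<in>hom1 C P y. \<forall>k'\<in>hom1 C P y.
       \<forall>\<xi>0\<in>hom2 C (cmp C k q0) (cmp C k' q0). \<forall>\<xi>1\<in>hom2 C (cmp C k q1) (cmp C k' q1).
         hcmp C \<xi>0 (id2 C f0) = hcmp C \<xi>1 (id2 C f1) \<longrightarrow>
         (\<exists>!\<xi>. \<xi> \<in> hom2 C k k' \<and> hcmp C \<xi> (id2 C q0) = \<xi>0 \<and> hcmp C \<xi> (id2 C q1) = \<xi>1))"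

definition is_ran ::
  "('o, 'm, 'c, 'x) twocat_scheme \<Rightarrow> 'm \<Rightarrow> 'm \<Rightarrow> 'm \<Rightarrow> 'c \<Rightarrow> bool" where
  "is_ran C f g r \<gamma> \<longleftrightarrow>
    f \<in> Arr C \<and> g \<in> Arr C \<and> src C f = src C g \<and>
    r \<in> hom1 C (trg C g) (trg C f) \<and> \<gamma> \<in> hom2 C (cmp C r g) f \<and>
    (\<forall>k\<in>hom1 C (trg C g) (trg C f).
       bij_betw (\<lambda>\<beta>. vcmp C \<gamma> (hcmp C \<beta> (id2 C g))) (hom2 C k r) (hom2 C (cmp C k g) f))"

definition preserves_ran ::
  "('o, 'm, 'c, 'x) twocat_scheme \<Rightarrow> 'm \<Rightarrow> 'm \<Rightarrow> 'm \<Rightarrow> 'm \<Rightarrow> 'c \<Rightarrow> bool" where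
  "preserves_ran C d f g r \<gamma> \<longleftrightarrow>
    d \<in> Arr C \<and> src C d = trg C f \<and>
    is_ran C (cmp C d f) g (cmp C d r) (hcmp C (id2 C d) \<gamma>)"

end

theory Submission
  imports Defs
begin

(* If l -| p, precomposition reverses the adjunction: on hom-categories, (-)p : A(b,y) -> A(e,y)
   is left adjoint to (-)l, with unit k eta and counit f eps. Hence every f : e -> y has the right
   Kan extension f l along p with counit f eps, the required bijection of 2-cells being
   transposition. Since d(f l) = (d f) l and d(f eps) = (d f) eps, this Kan extension is absolute;
   of the cokernel diagram only the 1-cell delta0 : b -> b up_p b is used. *)

locale strict_two_category =
  fixes C :: "('o, 'm, 'c, 'x) twocat_scheme"
  assumes two_category: "two_category C"
begin

lemma src_trg_obj:
  assumes "f \<in> Arr C" shows "src C f \<in> Obj C" and "trg C f \<in> Obj C"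
  using two_category assms by (unfold two_category_def, elim conjE, blast)+

lemma idm_arr [simp]:
  assumes "x \<in> Obj C"
  shows "idm C x \<in> Arr C" and "src C (idm C x) = x" and "trg C (idm C x) = x"
proof -
  have "\<forall>x\<in>Obj C. idm C x \<in> hom1 C x x"
    using two_category by (unfold two_category_def, elim conjE)
  with assms show "idm C x \<in> Arr C" "src C (idm C x) = x" "trg C (idm C x) = x"
    by (auto simp: hom1_def)
qed

lemma cmp_arr [simp]:
  assumes "f \<in> Arr C" "g \<in> Arr C" "trg C f = src C g"
  shows "cmp C g f \<in> Arr C" and "src C (cmp C g f) = src C f" and "trg C (cmp C g f) = trg C g"
proof -
  have "\<forall>x y z f g. f \<in> hom1 C x y \<longrightarrow> g \<in> hom1 C y z \<longrightarrow> cmp C g f \<in> hom1 C x z"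
    using two_category by (unfold two_category_def, elim conjE)
  with assms show "cmp C g f \<in> Arr C" "src C (cmp C g f) = src C f" "trg C (cmp C g f) = trg C g"
    by (auto simp: hom1_def)
qed

lemma cmp_assoc [simp]:
  assumes "f \<in> Arr C" "g \<in> Arr C" "h \<in> Arr C" "trg C f = src C g" "trg C g = src C h"
  shows "cmp C (cmp C h g) f = cmp C h (cmp C g f)"
proof -
  have "\<forall>w x y z f g h. f \<in> hom1 C w x \<longrightarrow> g \<in> hom1 C x y \<longrightarrow> h \<in> hom1 C y z \<longrightarrow>
        cmp C h (cmp C g f) = cmp C (cmp C h g) f"
    using two_category by (unfold two_category_def, elim conjE)
  with assms show ?thesis by (auto simp: hom1_def)
qed

lemma cmp_idm [simp]:
  assumes "f \<in> Arr C"
  shows "trg C f = y \<Longrightarrow> cmp C (idm C y) f = f" and "src C f = x \<Longrightarrow> cmp C f (idm C x) = f"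
proof -
  have "\<forall>f\<in>Arr C. cmp C (idm C (trg C f)) f = f \<and> cmp C f (idm C (src C f)) = f"
    using two_category by (unfold two_category_def, elim conjE)
  with assms show "trg C f = y \<Longrightarrow> cmp C (idm C y) f = f" "src C f = x \<Longrightarrow> cmp C f (idm C x) = f"
    by auto
qed

lemma cell_dom2_cod2 [simp]:
  assumes "a \<in> Cell C"
  shows "dom2 C a \<in> Arr C" and "cod2 C a \<in> Arr C"
    and "src C (cod2 C a) = src C (dom2 C a)" and "trg C (cod2 C a) = trg C (dom2 C a)"
proof -
  have "\<forall>a\<in>Cell C. dom2 C a \<in> Arr C \<and> cod2 C a \<in> Arr C \<and>
        src C (dom2 C a) = src C (cod2 C a) \<and> trg C (dom2 C a) = trg C (cod2 C a)"
    using two_category by (unfold two_category_def, elim conjE)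
  with assms show "dom2 C a \<in> Arr C" "cod2 C a \<in> Arr C"
    "src C (cod2 C a) = src C (dom2 C a)" "trg C (cod2 C a) = trg C (dom2 C a)"
    by auto
qed

lemma id2_cell [simp]:
  assumes "f \<in> Arr C"
  shows "id2 C f \<in> Cell C" and "dom2 C (id2 C f) = f" and "cod2 C (id2 C f) = f"
proof -
  have "\<forall>f\<in>Arr C. id2 C f \<in> hom2 C f f"
    using two_category by (unfold two_category_def, elim conjE)
  with assms show "id2 C f \<in> Cell C" "dom2 C (id2 C f) = f" "cod2 C (id2 C f) = f"
    by (auto simp: hom2_def)
qed

lemma vcmp_cell [simp]:
  assumes "a \<in> Cell C" "b \<in> Cell C" "cod2 C a = dom2 C b"
  shows "vcmp C b a \<in> Cell C" and "dom2 C (vcmp C b a) = dom2 C a" and "cod2 C (vcmp C b a) = cod2 C b"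
proof -
  have "\<forall>f g h a b. a \<in> hom2 C f g \<longrightarrow> b \<in> hom2 C g h \<longrightarrow> vcmp C b a \<in> hom2 C f h"
    using two_category by (unfold two_category_def, elim conjE)
  with assms show "vcmp C b a \<in> Cell C" "dom2 C (vcmp C b a) = dom2 C a" "cod2 C (vcmp C b a) = cod2 C b"
    by (auto simp: hom2_def)
qed

lemma vcmp_assoc:
  assumes "a \<in> Cell C" "b \<in> Cell C" "c \<in> Cell C" "cod2 C a = dom2 C b" "cod2 C b = dom2 C c"
  shows "vcmp C (vcmp C c b) a = vcmp C c (vcmp C b a)"
proof -
  have "\<forall>f g h k a b c. a \<in> hom2 C f g \<longrightarrow> b \<in> hom2 C g h \<longrightarrow> c \<in> hom2 C h k \<longrightarrow>
        vcmp C c (vcmp C b a) = vcmp C (vcmp C c b) a"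
    using two_category by (unfold two_category_def, elim conjE)
  with assms show ?thesis by (auto simp: hom2_def)
qed

lemma vcmp_id2 [simp]:
  assumes "a \<in> Cell C"
  shows "cod2 C a = g \<Longrightarrow> vcmp C (id2 C g) a = a" and "dom2 C a = f \<Longrightarrow> vcmp C a (id2 C f) = a"
proof -
  have "\<forall>a\<in>Cell C. vcmp C (id2 C (cod2 C a)) a = a \<and> vcmp C a (id2 C (dom2 C a)) = a"
    using two_category by (unfold two_category_def, elim conjE)
  with assms show "cod2 C a = g \<Longrightarrow> vcmp C (id2 C g) a = a" "dom2 C a = f \<Longrightarrow> vcmp C a (id2 C f) = a"
    by auto
qed

lemma hcmp_cell [simp]:
  assumes "a \<in> Cell C" "b \<in> Cell C" "trg C (dom2 C a) = src C (dom2 C b)"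
  shows "hcmp C b a \<in> Cell C"
    and "dom2 C (hcmp C b a) = cmp C (dom2 C b) (dom2 C a)"
    and "cod2 C (hcmp C b a) = cmp C (cod2 C b) (cod2 C a)"
proof -
  have "\<forall>f f' g g' a b. a \<in> hom2 C f f' \<longrightarrow> b \<in> hom2 C g g' \<longrightarrow> trg C f = src C g \<longrightarrow>
        hcmp C b a \<in> hom2 C (cmp C g f) (cmp C g' f')"
    using two_category by (unfold two_category_def, elim conjE)
  with assms show "hcmp C b a \<in> Cell C" "dom2 C (hcmp C b a) = cmp C (dom2 C b) (dom2 C a)"
    "cod2 C (hcmp C b a) = cmp C (cod2 C b) (cod2 C a)"
    by (auto simp: hom2_def)
qed

lemma hcmp_id2 [simp]:
  assumes "f \<in> Arr C" "g \<in> Arr C" "trg C f = src C g"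
  shows "hcmp C (id2 C g) (id2 C f) = id2 C (cmp C g f)"
proof -
  have "\<forall>f g. f \<in> Arr C \<longrightarrow> g \<in> Arr C \<longrightarrow> trg C f = src C g \<longrightarrow>
        hcmp C (id2 C g) (id2 C f) = id2 C (cmp C g f)"
    using two_category by (unfold two_category_def, elim conjE)
  with assms show ?thesis by blast
qed

lemma interchange:
  assumes "a \<in> Cell C" "a' \<in> Cell C" "b \<in> Cell C" "b' \<in> Cell C"
    and "cod2 C a = dom2 C a'" "cod2 C b = dom2 C b'" "trg C (dom2 C a) = src C (dom2 C b)"
  shows "hcmp C (vcmp C b' b) (vcmp C a' a) = vcmp C (hcmp C b' a') (hcmp C b a)"
proof -
  have "\<forall>f f' f'' g g' g'' a a' b b'.
        a \<in> hom2 C f f' \<longrightarrow> a' \<in> hom2 C f' f'' \<longrightarrow> b \<in> hom2 C g g' \<longrightarrow> b' \<in> hom2 C g' g'' \<longrightarrow>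
        trg C f = src C g \<longrightarrow>
        hcmp C (vcmp C b' b) (vcmp C a' a) = vcmp C (hcmp C b' a') (hcmp C b a)"
    using two_category by (unfold two_category_def, elim conjE)
  with assms show ?thesis by (auto simp: hom2_def)
qed

lemma hcmp_assoc [simp]:
  assumes "a \<in> Cell C" "b \<in> Cell C" "c \<in> Cell C"
    and "trg C (dom2 C a) = src C (dom2 C b)" "trg C (dom2 C b) = src C (dom2 C c)"
  shows "hcmp C (hcmp C c b) a = hcmp C c (hcmp C b a)"
proof -
  have "\<forall>a b c. a \<in> Cell C \<longrightarrow> b \<in> Cell C \<longrightarrow> c \<in> Cell C \<longrightarrow>
        trg C (dom2 C a) = src C (dom2 C b) \<longrightarrow> trg C (dom2 C b) = src C (dom2 C c) \<longrightarrow>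
        hcmp C c (hcmp C b a) = hcmp C (hcmp C c b) a"
    using two_category by (unfold two_category_def, elim conjE)
  with assms show ?thesis by simp
qed

lemma hcmp_id2_idm [simp]:
  assumes "a \<in> Cell C"
  shows "trg C (dom2 C a) = y \<Longrightarrow> hcmp C (id2 C (idm C y)) a = a"
    and "src C (dom2 C a) = x \<Longrightarrow> hcmp C a (id2 C (idm C x)) = a"
proof -
  have "\<forall>a\<in>Cell C. hcmp C (id2 C (idm C (trg C (dom2 C a)))) a = a \<and>
                hcmp C a (id2 C (idm C (src C (dom2 C a)))) = a"
    using two_category by (unfold two_category_def, elim conjE)
  with assms show "trg C (dom2 C a) = y \<Longrightarrow> hcmp C (id2 C (idm C y)) a = a"
    "src C (dom2 C a) = x \<Longrightarrow> hcmp C a (id2 C (idm C x)) = a"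
    by auto
qed

(* Simp normal form: composites associate to the right and a left whisker by a composite is split.
   Right whiskers by composites stay merged, since splitting them would loop with hcmp_assoc. *)
lemma hcmp_id2_cmp [simp]:
  assumes "a \<in> Cell C" "f \<in> Arr C" "g \<in> Arr C" "trg C (dom2 C a) = src C f" "trg C f = src C g"
  shows "hcmp C (id2 C (cmp C g f)) a = hcmp C (id2 C g) (hcmp C (id2 C f) a)"
  using hcmp_assoc[of a "id2 C f" "id2 C g"] assms by simp

lemma hcmp_eq_vcmp_whiskers:
  assumes "a \<in> Cell C" "b \<in> Cell C" "trg C (dom2 C a) = src C (dom2 C b)"
  shows "hcmp C b a = vcmp C (hcmp C b (id2 C (cod2 C a))) (hcmp C (id2 C (dom2 C b)) a)"
    and "hcmp C b a = vcmp C (hcmp C (id2 C (cod2 C b)) a) (hcmp C b (id2 C (dom2 C a)))"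
  using interchange[of a "id2 C (cod2 C a)" "id2 C (dom2 C b)" b]
    interchange[of "id2 C (dom2 C a)" a b "id2 C (cod2 C b)"] assms
  by simp_all

lemma whisker_vcmp:
  assumes "a \<in> Cell C" "a' \<in> Cell C" "cod2 C a = dom2 C a'"
  shows "g \<in> Arr C \<Longrightarrow> trg C (dom2 C a) = src C g \<Longrightarrow>
      hcmp C (id2 C g) (vcmp C a' a) = vcmp C (hcmp C (id2 C g) a') (hcmp C (id2 C g) a)"
    and "f \<in> Arr C \<Longrightarrow> trg C f = src C (dom2 C a) \<Longrightarrow>
      hcmp C (vcmp C a' a) (id2 C f) = vcmp C (hcmp C a' (id2 C f)) (hcmp C a (id2 C f))"
  using interchange[of a a' "id2 C g" "id2 C g"] interchange[of "id2 C f" "id2 C f" a a'] assms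
  by simp_all

lemma is_adjunctionD:
  assumes "is_adjunction C l p \<epsilon> \<eta>" "p \<in> hom1 C e b"
  shows "p \<in> Arr C" "src C p = e" "trg C p = b" "l \<in> Arr C" "src C l = b" "trg C l = e"
    "e \<in> Obj C" "b \<in> Obj C"
    "\<epsilon> \<in> Cell C" "dom2 C \<epsilon> = cmp C l p" "cod2 C \<epsilon> = idm C e"
    "\<eta> \<in> Cell C" "dom2 C \<eta> = idm C b" "cod2 C \<eta> = cmp C p l"
    "vcmp C (hcmp C \<epsilon> (id2 C l)) (hcmp C (id2 C l) \<eta>) = id2 C l"
    "vcmp C (hcmp C (id2 C p) \<epsilon>) (hcmp C \<eta> (id2 C p)) = id2 C p"
  using assms src_trg_obj[of p] unfolding is_adjunction_def hom1_def hom2_def by auto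

lemma adjunction_transpose_left_inverse:
  assumes adj: "is_adjunction C l p \<epsilon> \<eta>" "p \<in> hom1 C e b"
    and f: "f \<in> hom1 C e y" and \<beta>: "\<beta> \<in> hom2 C k (cmp C f l)"
  shows "vcmp C (hcmp C (vcmp C (hcmp C (id2 C f) \<epsilon>) (hcmp C \<beta> (id2 C p))) (id2 C l))
           (hcmp C (id2 C k) \<eta>) = \<beta>"
proof -
  note adj = is_adjunctionD[OF adj]
  have f: "f \<in> Arr C" "src C f = e" "trg C f = y" using f by (auto simp: hom1_def)
  have \<beta>: "\<beta> \<in> Cell C" "dom2 C \<beta> = k" "cod2 C \<beta> = cmp C f l" using \<beta> by (auto simp: hom2_def)
  have k: "k \<in> Arr C" "src C k = b" "trg C k = y"
    using cell_dom2_cod2[OF \<beta>(1)] \<beta> adj f by auto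
  note facts = adj f \<beta> k
  have "vcmp C (hcmp C (vcmp C (hcmp C (id2 C f) \<epsilon>) (hcmp C \<beta> (id2 C p))) (id2 C l))
           (hcmp C (id2 C k) \<eta>)
      = vcmp C (vcmp C (hcmp C (id2 C f) (hcmp C \<epsilon> (id2 C l))) (hcmp C \<beta> (id2 C (cmp C p l))))
           (hcmp C (id2 C k) \<eta>)"
    using whisker_vcmp(2)[of "hcmp C \<beta> (id2 C p)" "hcmp C (id2 C f) \<epsilon>" l] facts by simp
  also have "\<dots> = vcmp C (hcmp C (id2 C f) (hcmp C \<epsilon> (id2 C l)))
           (vcmp C (hcmp C \<beta> (id2 C (cmp C p l))) (hcmp C (id2 C k) \<eta>))"
    using facts by (simp add: vcmp_assoc)
  also have "\<dots> = vcmp C (hcmp C (id2 C f) (hcmp C \<epsilon> (id2 C l))) (hcmp C \<beta> \<eta>)"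
    using hcmp_eq_vcmp_whiskers(1)[of \<eta> \<beta>] facts by simp
  also have "\<dots> = vcmp C (hcmp C (id2 C f) (hcmp C \<epsilon> (id2 C l)))
           (vcmp C (hcmp C (id2 C f) (hcmp C (id2 C l) \<eta>)) \<beta>)"
    using hcmp_eq_vcmp_whiskers(2)[of \<eta> \<beta>] facts by simp
  also have "\<dots> = vcmp C (hcmp C (id2 C f) (vcmp C (hcmp C \<epsilon> (id2 C l)) (hcmp C (id2 C l) \<eta>))) \<beta>"
    using whisker_vcmp(1)[of "hcmp C (id2 C l) \<eta>" "hcmp C \<epsilon> (id2 C l)" f] facts
    by (simp add: vcmp_assoc)
  also have "\<dots> = \<beta>"
    using facts by simp
  finally show ?thesis .
qed

lemma adjunction_transpose_right_inverse:
  assumes adj: "is_adjunction C l p \<epsilon> \<eta>" "p \<in> hom1 C e b"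
    and f: "f \<in> hom1 C e y" and k: "k \<in> hom1 C b y" and \<sigma>: "\<sigma> \<in> hom2 C (cmp C k p) f"
  shows "vcmp C (hcmp C (id2 C f) \<epsilon>)
           (hcmp C (vcmp C (hcmp C \<sigma> (id2 C l)) (hcmp C (id2 C k) \<eta>)) (id2 C p)) = \<sigma>"
proof -
  note adj = is_adjunctionD[OF adj]
  have f: "f \<in> Arr C" "src C f = e" "trg C f = y" using f by (auto simp: hom1_def)
  have k: "k \<in> Arr C" "src C k = b" "trg C k = y" using k by (auto simp: hom1_def)
  have \<sigma>: "\<sigma> \<in> Cell C" "dom2 C \<sigma> = cmp C k p" "cod2 C \<sigma> = f" using \<sigma> by (auto simp: hom2_def)
  note facts = adj f k \<sigma>
  have "vcmp C (hcmp C (id2 C f) \<epsilon>)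
           (hcmp C (vcmp C (hcmp C \<sigma> (id2 C l)) (hcmp C (id2 C k) \<eta>)) (id2 C p))
      = vcmp C (vcmp C (hcmp C (id2 C f) \<epsilon>) (hcmp C \<sigma> (id2 C (cmp C l p))))
           (hcmp C (id2 C k) (hcmp C \<eta> (id2 C p)))"
    using whisker_vcmp(2)[of "hcmp C (id2 C k) \<eta>" "hcmp C \<sigma> (id2 C l)" p] facts
    by (simp add: vcmp_assoc)
  also have "\<dots> = vcmp C (hcmp C \<sigma> \<epsilon>) (hcmp C (id2 C k) (hcmp C \<eta> (id2 C p)))"
    using hcmp_eq_vcmp_whiskers(2)[of \<epsilon> \<sigma>] facts by simp
  also have "\<dots> = vcmp C (vcmp C \<sigma> (hcmp C (id2 C k) (hcmp C (id2 C p) \<epsilon>)))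
           (hcmp C (id2 C k) (hcmp C \<eta> (id2 C p)))"
    using hcmp_eq_vcmp_whiskers(1)[of \<epsilon> \<sigma>] facts by simp
  also have "\<dots> = vcmp C \<sigma> (hcmp C (id2 C k) (vcmp C (hcmp C (id2 C p) \<epsilon>) (hcmp C \<eta> (id2 C p))))"
    using whisker_vcmp(1)[of "hcmp C \<eta> (id2 C p)" "hcmp C (id2 C p) \<epsilon>" k] facts
    by (simp add: vcmp_assoc)
  also have "\<dots> = \<sigma>"
    using facts by simp
  finally show ?thesis .
qed

lemma is_ran_along_right_adjoint:
  assumes adj: "is_adjunction C l p \<epsilon> \<eta>" "p \<in> hom1 C e b" and f: "f \<in> hom1 C e y"
  shows "is_ran C f p (cmp C f l) (hcmp C (id2 C f) \<epsilon>)"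
  unfolding is_ran_def
proof (intro conjI ballI)
  have f': "f \<in> Arr C" "src C f = e" "trg C f = y" using f by (auto simp: hom1_def)
  note facts = is_adjunctionD[OF adj] f'
  show "f \<in> Arr C" "p \<in> Arr C" "src C f = src C p"
    "cmp C f l \<in> hom1 C (trg C p) (trg C f)"
    "hcmp C (id2 C f) \<epsilon> \<in> hom2 C (cmp C (cmp C f l) p) f"
    using facts by (simp_all add: hom1_def hom2_def)
  fix k assume "k \<in> hom1 C (trg C p) (trg C f)"
  then have k: "k \<in> hom1 C b y" using facts by simp
  then have k': "k \<in> Arr C" "src C k = b" "trg C k = y" by (auto simp: hom1_def)
  show "bij_betw (\<lambda>\<beta>. vcmp C (hcmp C (id2 C f) \<epsilon>) (hcmp C \<beta> (id2 C p)))
      (hom2 C k (cmp C f l)) (hom2 C (cmp C k p) f)"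
    by (rule bij_betw_byWitness
          [where f' = "\<lambda>\<sigma>. vcmp C (hcmp C \<sigma> (id2 C l)) (hcmp C (id2 C k) \<eta>)"])
      (use adjunction_transpose_left_inverse[OF adj f]
         adjunction_transpose_right_inverse[OF adj f k] facts k' in \<open>auto simp: hom2_def\<close>)
qed

lemma preserves_ran_along_right_adjoint:
  assumes adj: "is_adjunction C l p \<epsilon> \<eta>" "p \<in> hom1 C e b"
    and f: "f \<in> hom1 C e y" and d: "d \<in> hom1 C y z"
  shows "preserves_ran C d f p (cmp C f l) (hcmp C (id2 C f) \<epsilon>)"
proof -
  have f': "f \<in> Arr C" "src C f = e" "trg C f = y" using f by (auto simp: hom1_def)
  have d': "d \<in> Arr C" "src C d = y" "trg C d = z" using d by (auto simp: hom1_def)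
  note facts = is_adjunctionD[OF adj] f' d'
  have "cmp C d f \<in> hom1 C e z" using facts by (simp add: hom1_def)
  from is_ran_along_right_adjoint[OF adj this] show ?thesis
    unfolding preserves_ran_def using facts by simp
qed

end

theorem proposition4p3:
  fixes C :: "('o, 'm, 'c) twocat"
  assumes "two_category C"
    and "p \<in> hom1 C e b"
    and "is_opcomma C p q \<delta>0 \<delta>1 \<alpha>"
    and "is_2pushout C \<delta>0 \<delta>1 P D2 D0"
    and "\<exists>l \<epsilon> \<eta>. is_adjunction C l p \<epsilon> \<eta>"
  shows "\<exists>t \<gamma>. is_ran C p p t \<gamma> \<and> preserves_ran C \<delta>0 p p t \<gamma>"
proof -
  interpret strict_two_category C by unfold_locales (fact assms(1))
  obtain l \<epsilon> \<eta> where adj: "is_adjunction C l p \<epsilon> \<eta>" using assms(5) by blast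
  have "\<delta>0 \<in> hom1 C b q" using assms(2,3) by (simp add: is_opcomma_def hom1_def)
  then show ?thesis
    using is_ran_along_right_adjoint[OF adj assms(2,2)]
      preserves_ran_along_right_adjoint[OF adj assms(2,2)] by blast
qed

end
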